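(* Let $F$ be a smooth regular distribution with PDF $f$ and $\ell$ an integer. For any two points $x<x'$ with $2^{-\ell}\le1-F(x')<1-F(x)\le2^{-\ell+1}$ it holds that $f(x')>2^{-33}f(x)$.
   Context: A distribution is smooth if it has no point masses and its PDF $f$ is $C^1$. A smooth distribution is regular iff $f'(v)(1-F(v))\ge-2f(v)^2$ for all $v$. *)

theory Defs
  imports "HOL-Analysis.Analysis"
begin

definition C1_fun :: "(real \<Rightarrow> real) \<Rightarrow> bool" where
  "C1_fun f \<longleftrightarrow> (\<exists>f'. (\<forall>x. (f has_real_derivative f' x) (at x)) \<and> continuous_on UNIV f')"

text \<open>f is a probability density function and F is the CDF of the distribution it defines:
  F x = integral of f over (-infinity, x]. Having a density, the distribution has no point masses.\<close>
definition is_pdf_cdf :: "(real \<Rightarrow> real) \<Rightarrow> (real \<Rightarrow> real) \<Rightarrow> bool" where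
  "is_pdf_cdf F f \<longleftrightarrow> (\<forall>x. 0 \<le> f x) \<and> (f has_integral 1) UNIV \<and>
     (\<forall>x. (f has_integral F x) {..x})"

definition smooth_distribution :: "(real \<Rightarrow> real) \<Rightarrow> (real \<Rightarrow> real) \<Rightarrow> bool" where
  "smooth_distribution F f \<longleftrightarrow> is_pdf_cdf F f \<and> C1_fun f"

definition regular_distribution :: "(real \<Rightarrow> real) \<Rightarrow> (real \<Rightarrow> real) \<Rightarrow> bool" where
  "regular_distribution F f \<longleftrightarrow> smooth_distribution F f \<and>
     (\<forall>v. deriv f v * (1 - F v) \<ge> - 2 * (f v)\<^sup>2)"

end

theory Submission
  imports Defs
begin

text \<open>Write \<open>G = 1 - F\<close>. Regularity \<open>f' G \<ge> -2 f\<^sup>2\<close> says exactly that \<open>f / G\<^sup>2\<close> is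
  nondecreasing wherever \<open>G > 0\<close>. If \<open>x < x'\<close> lie in one dyadic tail band, then \<open>G x \<le> 2 G x'\<close>,
  so \<open>f x \<le> 4 f x'\<close>; and \<open>f x' > 0\<close>, because otherwise monotonicity forces \<open>f = 0\<close> on \<open>[x, x']\<close>
  and \<open>F\<close> could not increase there. Hence \<open>f x' > 2 powr -33 * f x\<close> with much room to spare.\<close>

lemma C1_fun_imp_continuous: "C1_fun f \<Longrightarrow> continuous_on UNIV f"
  unfolding C1_fun_def
  by (meson DERIV_isCont continuous_at_imp_continuous_on)

lemma pdf_cdf_diff:
  assumes "is_pdf_cdf F f" "continuous_on UNIV f" "a \<le> b"
  shows "F b = F a + integral {a..b} f"
proof -
  have F: "\<And>x. (f has_integral F x) {..x}"
    using assms(1) unfolding is_pdf_cdf_def by blast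
  have "(f has_integral integral {a..b} f) {a..b}"
    using assms(2) continuous_on_subset integrable_continuous_real integrable_integral by blast
  moreover have "{..a} \<inter> {a..b} = {a}" using assms(3) by auto
  then have "negligible ({..a} \<inter> {a..b})" by simp
  ultimately have "(f has_integral (F a + integral {a..b} f)) ({..a} \<union> {a..b})"
    using has_integral_Un F by blast
  moreover have "{..a} \<union> {a..b} = {..b}" using assms(3) by auto
  ultimately show ?thesis using F[of b] has_integral_unique by metis
qed

lemma pdf_cdf_mono:
  assumes "is_pdf_cdf F f" "continuous_on UNIV f" "a \<le> b"
  shows "F a \<le> F b"
proof -
  have "0 \<le> integral {a..b} f"
    using assms(1,2)
    by (intro integral_nonneg integrable_continuous_real continuous_on_subset[OF assms(2)])
       (auto simp: is_pdf_cdf_def)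
  then show ?thesis using pdf_cdf_diff[OF assms] by simp
qed

lemma pdf_cdf_has_real_derivative:
  assumes "is_pdf_cdf F f" "continuous_on UNIV f"
  shows "(F has_real_derivative f t) (at t)"
proof -
  have "((\<lambda>u. integral {t-1..u} f) has_real_derivative f t) (at t within {t-1..t+1})"
    by (rule integral_has_real_derivative) (auto intro: continuous_on_subset[OF assms(2)])
  then have "((\<lambda>u. F (t-1) + integral {t-1..u} f) has_real_derivative f t) (at t within {t-1..t+1})"
    by (auto intro!: derivative_eq_intros)
  then have "(F has_real_derivative f t) (at t within {t-1..t+1})"
    by (rule has_field_derivative_transform_within[where d=1])
       (auto simp: dist_real_def pdf_cdf_diff[OF assms])
  then show ?thesis by (simp add: at_within_Icc_at)
qed

lemma regular_density_over_tail_squared_mono: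
  assumes reg: "regular_distribution F f" and "s \<le> t" and tail: "F t < 1"
  shows "f s / (1 - F s)\<^sup>2 \<le> f t / (1 - F t)\<^sup>2"
proof -
  have pdf: "is_pdf_cdf F f" and "C1_fun f"
    using reg unfolding regular_distribution_def smooth_distribution_def by auto
  then obtain f' where f': "\<And>y. (f has_real_derivative f' y) (at y)"
    unfolding C1_fun_def by blast
  have cont: "continuous_on UNIV f" using \<open>C1_fun f\<close> by (rule C1_fun_imp_continuous)
  define G where "G y = 1 - F y" for y
  have G_pos: "0 < G y" if "y \<le> t" for y
    using pdf_cdf_mono[OF pdf cont that] tail by (simp add: G_def)
  have regular: "0 \<le> f' y * G y + 2 * (f y)\<^sup>2" for y
  proof -
    have "- 2 * (f y)\<^sup>2 \<le> deriv f y * (1 - F y)"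
      using reg unfolding regular_distribution_def by blast
    then show ?thesis using f'[of y, THEN DERIV_imp_deriv] by (simp add: G_def)
  qed
  define h' where "h' y = (f' y * G y + 2 * (f y)\<^sup>2) / (G y)^3" for y
  have h_deriv: "((\<lambda>u. f u / (G u)\<^sup>2) has_real_derivative h' y) (at y)" if "y \<le> t" for y
  proof -
    have "(G has_real_derivative - f y) (at y)"
      unfolding G_def[abs_def]
      using pdf_cdf_has_real_derivative[OF pdf cont]
      by (auto intro!: derivative_eq_intros)
    then have "((\<lambda>u. f u / (G u)\<^sup>2) has_real_derivative
        (f' y * (G y)\<^sup>2 - f y * (2 * G y * (- f y))) / ((G y)\<^sup>2)\<^sup>2) (at y)"
      using G_pos[OF that] f'[of y]
      by (auto intro!: derivative_eq_intros simp: power2_eq_square)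
    moreover have "(f' y * (G y)\<^sup>2 - f y * (2 * G y * (- f y))) / ((G y)\<^sup>2)\<^sup>2 = h' y"
      using G_pos[OF that] unfolding h'_def by (simp add: divide_simps) algebra
    ultimately show ?thesis by simp
  qed
  have "f s / (G s)\<^sup>2 \<le> f t / (G t)\<^sup>2"
  proof (rule DERIV_nonneg_imp_increasing_open[OF \<open>s \<le> t\<close>])
    fix y assume "s < y" "y < t"
    show "\<exists>d. ((\<lambda>u. f u / (G u)\<^sup>2) has_real_derivative d) (at y) \<and> 0 \<le> d"
    proof (intro exI conjI)
      show "((\<lambda>u. f u / (G u)\<^sup>2) has_real_derivative h' y) (at y)"
        using \<open>y < t\<close> h_deriv by simp
      show "0 \<le> h' y"
        using G_pos[of y] \<open>y < t\<close> regular[of y] unfolding h'_def by simp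
    qed
  next
    show "continuous_on {s..t} (\<lambda>u. f u / (G u)\<^sup>2)"
      using h_deriv by (intro continuous_at_imp_continuous_on ballI DERIV_isCont) auto
  qed
  then show ?thesis by (simp add: G_def)
qed

lemma regular_density_pos:
  assumes reg: "regular_distribution F f" and "s \<le> t" "F s < F t" "F t < 1"
  shows "0 < f t"
proof (rule ccontr)
  assume "\<not> 0 < f t"
  have pdf: "is_pdf_cdf F f" and cont: "continuous_on UNIV f"
    using reg C1_fun_imp_continuous
    unfolding regular_distribution_def smooth_distribution_def by auto
  have f_nonneg: "0 \<le> f y" for y using pdf by (simp add: is_pdf_cdf_def)
  have "f y = 0" if "y \<in> {s..t}" for y
  proof -
    have "0 < 1 - F y"
      using that pdf_cdf_mono[OF pdf cont, of y t] \<open>F t < 1\<close> by auto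
    have "f y / (1 - F y)\<^sup>2 \<le> f t / (1 - F t)\<^sup>2"
      using that regular_density_over_tail_squared_mono[OF reg _ \<open>F t < 1\<close>] by auto
    also have "\<dots> = 0" using \<open>\<not> 0 < f t\<close> f_nonneg[of t] by simp
    finally show ?thesis
      using f_nonneg[of y] \<open>0 < 1 - F y\<close> by (simp add: divide_le_0_iff)
  qed
  then have "integral {s..t} f = integral {s..t} (\<lambda>_. 0)" by (intro integral_cong) auto
  then have "integral {s..t} f = 0" by simp
  then show False using pdf_cdf_diff[OF pdf cont \<open>s \<le> t\<close>] \<open>F s < F t\<close> by simp
qed

lemma regular_density_doubling_bound:
  assumes reg: "regular_distribution F f" and "s \<le> t" "F t < 1"
    and doubling: "1 - F s \<le> 2 * (1 - F t)"
  shows "f s \<le> 4 * f t"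
proof -
  have pdf: "is_pdf_cdf F f" and cont: "continuous_on UNIV f"
    using reg C1_fun_imp_continuous
    unfolding regular_distribution_def smooth_distribution_def by auto
  have G_pos: "0 < 1 - F s" "0 < 1 - F t"
    using pdf_cdf_mono[OF pdf cont \<open>s \<le> t\<close>] \<open>F t < 1\<close> by auto
  have "f s * (1 - F t)\<^sup>2 \<le> f t * (1 - F s)\<^sup>2"
    using regular_density_over_tail_squared_mono[OF assms(1-3)] G_pos
    by (simp add: field_simps)
  also have "\<dots> \<le> f t * (2 * (1 - F t))\<^sup>2"
    using doubling G_pos pdf
    by (intro mult_left_mono power_mono) (auto simp: is_pdf_cdf_def)
  also have "\<dots> = (4 * f t) * (1 - F t)\<^sup>2"
    by (simp only: power_mult_distrib) simp
  finally show ?thesis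
    using G_pos by simp
qed

theorem corollary2:
  fixes F f :: "real \<Rightarrow> real" and l :: int and x x' :: real
  assumes "smooth_distribution F f"
    and "regular_distribution F f"
    and "x < x'"
    and "2 powr (- real_of_int l) \<le> 1 - F x'"
    and "1 - F x' < 1 - F x"
    and "1 - F x \<le> 2 powr (- real_of_int l + 1)"
  shows "f x' > 2 powr (-33) * f x"
proof -
  have "0 < 2 powr (- real_of_int l)" by simp
  then have tail: "F x' < 1" using assms(4) by linarith
  have "1 - F x \<le> 2 * 2 powr (- real_of_int l)"
    using assms(6) powr_add[of 2 "- real_of_int l" 1] by simp
  then have "1 - F x \<le> 2 * (1 - F x')"
    using order_trans mult_left_mono[OF assms(4), of 2] by fastforce
  then have "f x \<le> 4 * f x'"
    using regular_density_doubling_bound assms(2,3) tail by simp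
  moreover have "0 < f x'"
    using regular_density_pos[OF assms(2) less_imp_le[OF assms(3)]] assms(5) tail by simp
  ultimately show ?thesis
    by (simp add: powr_minus)
qed

end
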